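(* Let $A$ be a linearly ordered set and let $G$ be a passable game over $A$ that is in canonical form. Then $G$ is monotone.
   Context: Games over a poset $A$ are defined inductively: for each $a\in A$ there is an atomic game $[a]$, which has no options; and if $L$ and $R$ are non-empty sets of games, then $\{L\mid R\}$ is a composite game with left options $L$ and right options $R$. The relations $\le$ and $\lhd$ are defined by simultaneous recursion: $G\le H$ iff (1) every left option $G^L$ of $G$ satisfies $G^L\lhd H$, (2) every right option $H^R$ of $H$ satisfies $G\lhd H^R$, and (3) if $G$ or $H$ is atomic then $G\lhd H$; and $G\lhd H$ iff (1) some right option $G^R$ of $G$ satisfies $G^R\le H$, or (2) some left option $H^L$ of $H$ satisfies $G\le H^L$, or (3) $G=[a]$, $H=[b]$ are atomic and $a\le b$. $G\equiv H$ means $G\le H$ and $H\le G$. A game $G$ is passable if $G\lhd G$ and recursively all its options are passable. A left option $G^L$ is good if $G\le G^L$, a right option $G^R$ is good if $G^R\le G$; a game is monotone if all its options are good and recursively all its options are monotone. Canonical form: among distinct left options $H,K$ of $G$, $K$ is dominated if $K\le H$; among distinct right options $H,K$, $K$ is dominated if $H\le K$. A left option $H$ of $G$ is reversible if $H$ has a right option $K$ with $K\le G$; a right option $H$ of $G$ is reversible if $H$ has a left option $K$ with $G\le K$. An option $H$ of $G$ is a passing option if $H\equiv G$. $G$ is in canonical form if it has no dominated, reversible or passing options and all its options are in canonical form. *)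

theory Defs
  imports Main "HOL-Library.FSet"
begin

text \<open>Non-emptiness of the
  option sets is enforced by the predicate wf_game.\<close>

datatype 'a game = Atom 'a | Comp "'a game fset" "'a game fset"

fun leftopts :: "'a game \<Rightarrow> 'a game fset" where
  "leftopts (Atom a) = {||}"
| "leftopts (Comp L R) = L"

fun rightopts :: "'a game \<Rightarrow> 'a game fset" where
  "rightopts (Atom a) = {||}"
| "rightopts (Comp L R) = R"

fun is_atom :: "'a game \<Rightarrow> bool" where
  "is_atom (Atom a) = True"
| "is_atom (Comp L R) = False"

lemma size_fset_mem: "x |\<in>| S \<Longrightarrow> f x < size_fset f S"
proof -
  assume "x |\<in>| S"
  hence "(Suc \<circ> f) x \<le> sum (Suc \<circ> f) (fset S)"
    by (intro member_le_sum) auto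
  thus ?thesis by (simp add: size_fset.rep_eq)
qed

lemma size_leftopts[termination_simp]: "x |\<in>| leftopts G \<Longrightarrow> size x < size G"
  by (cases G) (auto dest: size_fset_mem[of _ _ size])

lemma size_rightopts[termination_simp]: "x |\<in>| rightopts G \<Longrightarrow> size x < size G"
  by (cases G) (auto dest: size_fset_mem[of _ _ size])

lemma size_Comp_L[termination_simp]: "x |\<in>| L \<Longrightarrow> size x < size (Comp L R)"
  using size_leftopts[of x "Comp L R"] by simp

lemma size_Comp_R[termination_simp]: "x |\<in>| R \<Longrightarrow> size x < size (Comp L R)"
  using size_rightopts[of x "Comp L R"] by simp

lemma size_sum_mem_L[termination_simp]:
  "x |\<in>| L \<Longrightarrow> size x < Suc ((\<Sum>x\<in>fset L. Suc (size x)) + (\<Sum>x\<in>fset R. Suc ((size::'b::size\<Rightarrow>nat) x)))"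
  using size_fset_mem[of x L size] by (simp add: size_fset.rep_eq)

lemma size_sum_mem_R[termination_simp]:
  "x |\<in>| R \<Longrightarrow> size x < Suc ((\<Sum>x\<in>fset L. Suc ((size::'b::size\<Rightarrow>nat) x)) + (\<Sum>x\<in>fset R. Suc (size x)))"
  using size_fset_mem[of x R size] by (simp add: size_fset.rep_eq)

fun wf_game :: "'a game \<Rightarrow> bool" where
  "wf_game (Atom a) = True"
| "wf_game (Comp L R) = (L \<noteq> {||} \<and> R \<noteq> {||} \<and> fBall L wf_game \<and> fBall R wf_game)"

fun atom_le :: "'a::order game \<Rightarrow> 'a game \<Rightarrow> bool" where
  "atom_le (Atom a) (Atom b) = (a \<le> b)"
| "atom_le _ _ = False"

function game_le :: "'a::order game \<Rightarrow> 'a game \<Rightarrow> bool"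
  and game_lf :: "'a::order game \<Rightarrow> 'a game \<Rightarrow> bool" where
  "game_le G H =
     ((\<forall>GL|\<in>|leftopts G. game_lf GL H) \<and>
      (\<forall>HR|\<in>|rightopts H. game_lf G HR) \<and>
      ((is_atom G \<or> is_atom H) \<longrightarrow> game_lf G H))"
| "game_lf G H =
     ((\<exists>GR|\<in>|rightopts G. game_le GR H) \<or>
      (\<exists>HL|\<in>|leftopts H. game_le G HL) \<or>
      atom_le G H)"
  by pat_completeness auto
termination
  by (relation "measures [\<lambda>x. case x of Inl (G, H) \<Rightarrow> size G + size H | Inr (G, H) \<Rightarrow> size G + size H,
                          \<lambda>x. case x of Inl _ \<Rightarrow> 1 | Inr _ \<Rightarrow> 0]")
     (simp_all, (drule size_leftopts size_rightopts, simp)+)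

declare game_le.simps[simp del] game_lf.simps[simp del]

definition game_equiv :: "'a::order game \<Rightarrow> 'a game \<Rightarrow> bool" where
  "game_equiv G H \<longleftrightarrow> game_le G H \<and> game_le H G"

fun passable :: "'a::order game \<Rightarrow> bool" where
  "passable (Atom a) = game_lf (Atom a) (Atom a)"
| "passable (Comp L R) =
     (game_lf (Comp L R) (Comp L R) \<and> fBall L passable \<and> fBall R passable)"

fun monotone_game :: "'a::order game \<Rightarrow> bool" where
  "monotone_game (Atom a) = True"
| "monotone_game (Comp L R) =
     ((\<forall>GL|\<in>|L. game_le (Comp L R) GL) \<and>
      (\<forall>GR|\<in>|R. game_le GR (Comp L R)) \<and>
      fBall L monotone_game \<and> fBall R monotone_game)"

definition has_dominated :: "'a::order game \<Rightarrow> bool" where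
  "has_dominated G \<longleftrightarrow>
     (\<exists>H K. H |\<in>| leftopts G \<and> K |\<in>| leftopts G \<and> H \<noteq> K \<and> game_le K H) \<or>
     (\<exists>H K. H |\<in>| rightopts G \<and> K |\<in>| rightopts G \<and> H \<noteq> K \<and> game_le H K)"

definition has_reversible :: "'a::order game \<Rightarrow> bool" where
  "has_reversible G \<longleftrightarrow>
     (\<exists>H. H |\<in>| leftopts G \<and> (\<exists>K|\<in>|rightopts H. game_le K G)) \<or>
     (\<exists>H. H |\<in>| rightopts G \<and> (\<exists>K|\<in>|leftopts H. game_le G K))"

definition has_passing :: "'a::order game \<Rightarrow> bool" where
  "has_passing G \<longleftrightarrow>
     (\<exists>H. (H |\<in>| leftopts G \<or> H |\<in>| rightopts G) \<and> game_equiv H G)"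

fun canonical :: "'a::order game \<Rightarrow> bool" where
  "canonical (Atom a) = True"
| "canonical (Comp L R) =
     (\<not> has_dominated (Comp L R) \<and> \<not> has_reversible (Comp L R) \<and>
      \<not> has_passing (Comp L R) \<and> fBall L canonical \<and> fBall R canonical)"

end

(*
  Let H be a left option of a passable canonical game G. Over a linear order any two
  passable games are comparable: H \<le> K or K \<lhd> H (induction on the pair; the atomic case
  uses that a passable game satisfies K \<lhd> K). So every other left option K of G satisfies
  K \<lhd> H, since H \<le> K would make H dominated, and G \<lhd> H\<^sup>R for every right option of H,
  since H\<^sup>R \<le> G would make H reversible. These are the clauses of G \<le> H, except the one
  for an atomic H = [c]: G \<lhd> [c] follows from G \<lhd> G by an induction over the passable
  games below G. Right options are handled by the symmetry that swaps Left and Right and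
  reverses the order of A.
*)

theory Submission
  imports Defs "HOL-Library.Dual_Ordered_Lattice"
begin

lemma game_lf_rightoptI: "GR |\<in>| rightopts G \<Longrightarrow> game_le GR H \<Longrightarrow> game_lf G H"
  by (subst game_lf.simps) auto

lemma game_lf_leftoptI: "HL |\<in>| leftopts H \<Longrightarrow> game_le G HL \<Longrightarrow> game_lf G H"
  by (subst game_lf.simps) auto

lemma game_lf_Atom_Atom [simp]: "game_lf (Atom a) (Atom b) \<longleftrightarrow> a \<le> b"
  by (subst game_lf.simps) auto

lemma game_le_Atom_Atom [simp]: "game_le (Atom a) (Atom b) \<longleftrightarrow> a \<le> b"
  by (subst game_le.simps) auto

lemma game_lfE:
  assumes "game_lf G H"
  obtains (right) GR where "GR |\<in>| rightopts G" "game_le GR H"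
  | (left) HL where "HL |\<in>| leftopts H" "game_le G HL"
  | (atoms) a b where "G = Atom a" "H = Atom b" "a \<le> b"
  using assms by (subst (asm) game_lf.simps) (auto elim: atom_le.elims)

lemma game_le_leftoptD: "game_le G H \<Longrightarrow> GL |\<in>| leftopts G \<Longrightarrow> game_lf GL H"
  by (subst (asm) game_le.simps) auto

lemma game_le_rightoptD: "game_le G H \<Longrightarrow> HR |\<in>| rightopts H \<Longrightarrow> game_lf G HR"
  by (subst (asm) game_le.simps) auto

lemma game_le_atomD: "game_le G H \<Longrightarrow> is_atom G \<or> is_atom H \<Longrightarrow> game_lf G H"
  by (subst (asm) game_le.simps) auto

lemma game_leI:
  "(\<And>GL. GL |\<in>| leftopts G \<Longrightarrow> game_lf GL H) \<Longrightarrow> (\<And>HR. HR |\<in>| rightopts H \<Longrightarrow> game_lf G HR)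
   \<Longrightarrow> (is_atom G \<or> is_atom H \<Longrightarrow> game_lf G H) \<Longrightarrow> game_le G H"
  by (subst game_le.simps) auto

lemma passable_lf_self: "passable G \<Longrightarrow> game_lf G G"
  by (cases G) auto

lemma passable_leftopt: "passable G \<Longrightarrow> GL |\<in>| leftopts G \<Longrightarrow> passable GL"
  by (cases G) auto

lemma passable_rightopt: "passable G \<Longrightarrow> GR |\<in>| rightopts G \<Longrightarrow> passable GR"
  by (cases G) auto

lemma game_le_refl: "game_le G G"
proof (induction G)
  case (Comp L R)
  then show ?case
    by (intro game_leI) (auto intro: game_lf_leftoptI game_lf_rightoptI)
qed simp

definition game_trans_at :: "'a::order game \<Rightarrow> 'a game \<Rightarrow> 'a game \<Rightarrow> bool" where
  "game_trans_at G H K \<longleftrightarrow>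
     (game_le G H \<longrightarrow> game_le H K \<longrightarrow> game_le G K) \<and>
     (game_le G H \<longrightarrow> game_lf H K \<longrightarrow> game_lf G K) \<and>
     (game_lf G H \<longrightarrow> game_le H K \<longrightarrow> game_lf G K)"

lemma game_le_lf_trans_step:
  fixes G H K :: "'a::order game"
  assumes IH: "\<And>G' H' K' :: 'a game. size G' + size H' + size K' < size G + size H + size K \<Longrightarrow>
      game_trans_at G' H' K'"
    and GH: "game_le G H" and HK: "game_lf H K"
  shows "game_lf G K"
  using HK
proof (cases rule: game_lfE)
  case (right HR)
  moreover have "game_lf G HR"
    using GH \<open>HR |\<in>| rightopts H\<close> by (rule game_le_rightoptD)
  ultimately show ?thesis
    using IH[of G HR K] size_rightopts[of HR H] by (auto simp: game_trans_at_def)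
next
  case (left KL)
  then have "game_le G KL"
    using GH IH[of G H KL] size_leftopts[of KL K] by (auto simp: game_trans_at_def)
  with \<open>KL |\<in>| leftopts K\<close> show ?thesis by (rule game_lf_leftoptI)
next
  case (atoms b c)
  from GH have "game_lf G H" using \<open>H = Atom b\<close> by (auto intro: game_le_atomD)
  then show ?thesis
  proof (cases rule: game_lfE)
    case (right GR)
    then have "game_le GR K"
      using HK atoms IH[of GR H K] size_rightopts[of GR G] by (auto simp: game_trans_at_def)
    with \<open>GR |\<in>| rightopts G\<close> show ?thesis by (rule game_lf_rightoptI)
  qed (use atoms in auto)
qed

lemma game_lf_le_trans_step:
  fixes G H K :: "'a::order game"
  assumes IH: "\<And>G' H' K' :: 'a game. size G' + size H' + size K' < size G + size H + size K \<Longrightarrow>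
      game_trans_at G' H' K'"
    and GH: "game_lf G H" and HK: "game_le H K"
  shows "game_lf G K"
  using GH
proof (cases rule: game_lfE)
  case (right GR)
  then have "game_le GR K"
    using HK IH[of GR H K] size_rightopts[of GR G] by (auto simp: game_trans_at_def)
  with \<open>GR |\<in>| rightopts G\<close> show ?thesis by (rule game_lf_rightoptI)
next
  case (left HL)
  moreover have "game_lf HL K"
    using HK \<open>HL |\<in>| leftopts H\<close> by (rule game_le_leftoptD)
  ultimately show ?thesis
    using IH[of G HL K] size_leftopts[of HL H] by (auto simp: game_trans_at_def)
next
  case (atoms a b)
  from HK have "game_lf H K" using \<open>H = Atom b\<close> by (auto intro: game_le_atomD)
  then show ?thesis
  proof (cases rule: game_lfE)
    case (left KL)
    then have "game_le G KL"
      using GH atoms IH[of G H KL] size_leftopts[of KL K] by (auto simp: game_trans_at_def)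
    with \<open>KL |\<in>| leftopts K\<close> show ?thesis by (rule game_lf_leftoptI)
  qed (use atoms in auto)
qed

lemma game_le_trans_step:
  fixes G H K :: "'a::order game"
  assumes IH: "\<And>G' H' K' :: 'a game. size G' + size H' + size K' < size G + size H + size K \<Longrightarrow>
      game_trans_at G' H' K'"
    and GH: "game_le G H" and HK: "game_le H K"
  shows "game_le G K"
proof (rule game_leI)
  fix GL assume "GL |\<in>| leftopts G"
  then show "game_lf GL K"
    using GH HK IH[of GL H K] size_leftopts[of GL G]
    by (auto simp: game_trans_at_def dest: game_le_leftoptD)
next
  fix KR assume "KR |\<in>| rightopts K"
  then show "game_lf G KR"
    using GH HK IH[of G H KR] size_rightopts[of KR K]
    by (auto simp: game_trans_at_def dest: game_le_rightoptD)
next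
  assume "is_atom G \<or> is_atom K"
  then show "game_lf G K"
    using game_le_lf_trans_step[OF IH GH] game_lf_le_trans_step[OF IH _ HK]
      game_le_atomD[OF GH] game_le_atomD[OF HK] by blast
qed

lemma game_trans_at_holds: "game_trans_at G H K"
proof (induction "size G + size H + size K" arbitrary: G H K rule: less_induct)
  case less
  show ?case
    unfolding game_trans_at_def
    using game_le_trans_step[OF less] game_le_lf_trans_step[OF less] game_lf_le_trans_step[OF less]
    by blast
qed

lemma game_le_trans: "game_le G H \<Longrightarrow> game_le H K \<Longrightarrow> game_le G K"
  using game_trans_at_holds by (auto simp: game_trans_at_def)

lemma game_le_lf_trans: "game_le G H \<Longrightarrow> game_lf H K \<Longrightarrow> game_lf G K"
  using game_trans_at_holds by (auto simp: game_trans_at_def)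

lemma game_lf_le_trans: "game_lf G H \<Longrightarrow> game_le H K \<Longrightarrow> game_lf G K"
  using game_trans_at_holds by (auto simp: game_trans_at_def)

lemma passable_Atom_lf_or_lf:
  fixes H :: "'a::linorder game"
  assumes "passable H"
    and on_right: "\<And>HR. HR |\<in>| rightopts H \<Longrightarrow> game_lf (Atom a) HR \<or> game_le HR (Atom a)"
    and on_left: "\<And>HL. HL |\<in>| leftopts H \<Longrightarrow> game_le (Atom a) HL \<or> game_lf HL (Atom a)"
  shows "game_lf (Atom a) H \<or> game_lf H (Atom a)"
  using passable_lf_self[OF \<open>passable H\<close>]
proof (cases rule: game_lfE)
  case (right HR)
  then show ?thesis
    using on_right[of HR] by (auto intro: game_lf_le_trans game_lf_rightoptI)
next
  case (left HL)
  then show ?thesis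
    using on_left[of HL] by (auto intro: game_le_lf_trans game_lf_leftoptI)
qed (auto simp: linear)

lemma passable_le_or_lf:
  fixes G H :: "'a::linorder game"
  assumes "passable G" "passable H"
  shows "game_le G H \<or> game_lf H G"
  using assms
proof (induction "size G + size H" arbitrary: G H rule: less_induct)
  case less
  have IH: "game_le G' H' \<or> game_lf H' G'"
    if "size G' + size H' < size G + size H" "passable G'" "passable H'" for G' H' :: "'a game"
    using less.hyps that by blast
  have atom: "game_lf G H \<or> game_lf H G" if "is_atom G \<or> is_atom H"
    using that
  proof
    assume "is_atom G"
    then obtain a where "G = Atom a" by (cases G) auto
    then show ?thesis
      using passable_Atom_lf_or_lf[of H a] less.prems IH[of G] IH[of _ G]
        size_leftopts[of _ H] size_rightopts[of _ H]
      by (auto intro: passable_leftopt passable_rightopt)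
  next
    assume "is_atom H"
    then obtain b where "H = Atom b" by (cases H) auto
    then show ?thesis
      using passable_Atom_lf_or_lf[of G b] less.prems IH[of H] IH[of _ H]
        size_leftopts[of _ G] size_rightopts[of _ G]
      by (auto intro: passable_leftopt passable_rightopt)
  qed
  show ?case
  proof (rule disjCI)
    assume not_lf: "\<not> game_lf H G"
    show "game_le G H"
    proof (rule game_leI)
      fix GL assume GL: "GL |\<in>| leftopts G"
      with not_lf have "\<not> game_le H GL" by (auto intro: game_lf_leftoptI)
      then show "game_lf GL H"
        using IH[of H GL] GL less.prems size_leftopts[OF GL] by (auto intro: passable_leftopt)
    next
      fix HR assume HR: "HR |\<in>| rightopts H"
      with not_lf have "\<not> game_le HR G" by (auto intro: game_lf_rightoptI)
      then show "game_lf G HR"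
        using IH[of HR G] HR less.prems size_rightopts[OF HR] by (auto intro: passable_rightopt)
    qed (use atom not_lf in blast)
  qed
qed

lemma passable_below_le_Atom:
  fixes X Z :: "'a::order game"
  assumes "\<not> is_atom X" and X_left: "\<And>XL. XL |\<in>| leftopts X \<Longrightarrow> game_lf XL (Atom a)"
    and "passable Z" "game_le Z X"
  shows "game_le Z (Atom a)"
  using assms(3,4)
proof (induction "size Z" arbitrary: Z rule: less_induct)
  case less
  have Z_left: "game_lf ZL (Atom a)" if ZL: "ZL |\<in>| leftopts Z" for ZL
    using game_le_leftoptD[OF \<open>game_le Z X\<close> ZL]
  proof (cases rule: game_lfE)
    case (right ZLR)
    moreover have "passable ZLR"
      using right ZL less.prems by (blast intro: passable_leftopt passable_rightopt)
    ultimately have "game_le ZLR (Atom a)"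
      using less.hyps size_leftopts[OF ZL] size_rightopts[of ZLR ZL] by force
    with \<open>ZLR |\<in>| rightopts ZL\<close> show ?thesis by (rule game_lf_rightoptI)
  qed (use X_left \<open>\<not> is_atom X\<close> in \<open>auto intro: game_le_lf_trans\<close>)
  have "game_lf Z (Atom a)"
    using passable_lf_self[OF \<open>passable Z\<close>]
  proof (cases rule: game_lfE)
    case (right ZR)
    then have "game_le ZR (Atom a)"
      using less.hyps less.prems size_rightopts[of ZR Z]
      by (blast intro: passable_rightopt game_le_trans)
    with \<open>ZR |\<in>| rightopts Z\<close> show ?thesis by (rule game_lf_rightoptI)
  next
    case (left ZL)
    then show ?thesis using Z_left by (auto intro: game_le_lf_trans)
  next
    case (atoms b c)
    from \<open>game_le Z X\<close> have "game_lf Z X" using \<open>Z = Atom b\<close> by (auto intro: game_le_atomD)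
    then show ?thesis
    proof (cases rule: game_lfE)
      case (left XL)
      then show ?thesis using X_left game_le_lf_trans by blast
    qed (use atoms \<open>\<not> is_atom X\<close> in auto)
  qed
  with Z_left show ?case by (auto intro: game_leI)
qed

lemma passable_leftopt_good:
  fixes G :: "'a::linorder game"
  assumes "passable G" "\<not> is_atom G" "\<not> has_dominated G" "\<not> has_reversible G"
    and H: "H |\<in>| leftopts G"
  shows "game_le G H"
proof -
  have "passable H" using \<open>passable G\<close> H by (rule passable_leftopt)
  have G_left: "game_lf GL H" if GL: "GL |\<in>| leftopts G" for GL
  proof (cases "GL = H")
    case True
    then show ?thesis using \<open>passable H\<close> by (simp add: passable_lf_self)
  next
    case False
    then have "\<not> game_le H GL"
      using \<open>\<not> has_dominated G\<close> GL H unfolding has_dominated_def by blast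
    then show ?thesis
      using passable_le_or_lf[of H GL] \<open>passable H\<close> \<open>passable G\<close> GL
      by (auto intro: passable_leftopt)
  qed
  have H_right: "game_lf G HR" if HR: "HR |\<in>| rightopts H" for HR
  proof -
    have "\<not> game_le HR G"
      using \<open>\<not> has_reversible G\<close> H HR unfolding has_reversible_def by blast
    then show ?thesis
      using passable_le_or_lf[of HR G] \<open>passable H\<close> \<open>passable G\<close> HR
      by (auto intro: passable_rightopt)
  qed
  have "game_lf G H" if "is_atom H"
  proof -
    from that obtain c where "H = Atom c" by (cases H) auto
    moreover have "game_le G (Atom c)"
      using passable_below_le_Atom[of G c G] assms(1,2) G_left game_le_refl
      unfolding \<open>H = Atom c\<close> by blast
    ultimately show ?thesis by (simp add: game_le_atomD)
  qed
  then show ?thesis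
    using G_left H_right \<open>\<not> is_atom G\<close> by (auto intro: game_leI)
qed

instance dual :: (linorder) linorder
  by standard (auto simp: dual_less_eq_iff)

fun dual_game :: "'a game \<Rightarrow> 'a dual game" where
  "dual_game (Atom a) = Atom (dual a)"
| "dual_game (Comp L R) = Comp (dual_game |`| R) (dual_game |`| L)"

lemma leftopts_dual_game [simp]: "leftopts (dual_game G) = dual_game |`| rightopts G"
  by (cases G) auto

lemma rightopts_dual_game [simp]: "rightopts (dual_game G) = dual_game |`| leftopts G"
  by (cases G) auto

lemma is_atom_dual_game [simp]: "is_atom (dual_game G) = is_atom G"
  by (cases G) auto

lemma atom_le_dual_game [simp]: "atom_le (dual_game G) (dual_game H) = atom_le H G"
  by (cases G; cases H) auto

lemma game_le_lf_dual_game: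
  fixes G H :: "'a::order game"
  shows "(game_le (dual_game G) (dual_game H) \<longleftrightarrow> game_le H G) \<and>
    (game_lf (dual_game G) (dual_game H) \<longleftrightarrow> game_lf H G)"
proof (induction "size G + size H" arbitrary: G H rule: less_induct)
  case less
  have le_left: "game_le (dual_game GL) (dual_game H) \<longleftrightarrow> game_le H GL"
    if "GL |\<in>| leftopts G" for GL
    using less size_leftopts[OF that] by simp
  have le_right: "game_le (dual_game G) (dual_game HR) \<longleftrightarrow> game_le HR G"
    if "HR |\<in>| rightopts H" for HR
    using less size_rightopts[OF that] by simp
  have lf_right: "game_lf (dual_game GR) (dual_game H) \<longleftrightarrow> game_lf H GR"
    if "GR |\<in>| rightopts G" for GR
    using less size_rightopts[OF that] by simp
  have lf_left: "game_lf (dual_game G) (dual_game HL) \<longleftrightarrow> game_lf HL G"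
    if "HL |\<in>| leftopts H" for HL
    using less size_leftopts[OF that] by simp
  have lf: "game_lf (dual_game G) (dual_game H) \<longleftrightarrow> game_lf H G"
    by (subst (1 2) game_lf.simps) (auto simp: le_left le_right)
  show ?case
    by (subst (1 2) game_le.simps) (auto simp: lf lf_left lf_right)
qed

lemma game_le_dual_game [simp]: "game_le (dual_game G) (dual_game H) \<longleftrightarrow> game_le H G"
  using game_le_lf_dual_game by blast

lemma game_lf_dual_game [simp]: "game_lf (dual_game G) (dual_game H) \<longleftrightarrow> game_lf H G"
  using game_le_lf_dual_game by blast

lemma passable_dual_game [simp]: "passable (dual_game G) \<longleftrightarrow> passable G"
proof (induction G)
  case (Comp L R)
  then show ?case
    using game_lf_dual_game[of "Comp L R" "Comp L R"] by auto
qed simp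

lemma has_dominated_dual_gameD: "has_dominated (dual_game G) \<Longrightarrow> has_dominated G"
  unfolding has_dominated_def by auto

lemma has_reversible_dual_gameD: "has_reversible (dual_game G) \<Longrightarrow> has_reversible G"
  unfolding has_reversible_def by auto

lemma passable_rightopt_good:
  fixes G :: "'a::linorder game"
  assumes "passable G" "\<not> is_atom G" "\<not> has_dominated G" "\<not> has_reversible G"
    and "H |\<in>| rightopts G"
  shows "game_le H G"
  using passable_leftopt_good[of "dual_game G" "dual_game H"] assms
  by (auto dest: has_dominated_dual_gameD has_reversible_dual_gameD)

lemma monotone_game_if_passable_canonical:
  fixes G :: "'a::linorder game"
  shows "passable G \<Longrightarrow> canonical G \<Longrightarrow> monotone_game G"
proof (induction G)
  case (Comp L R)
  then show ?case
    using passable_leftopt_good[of "Comp L R"] passable_rightopt_good[of "Comp L R"] by auto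
qed simp

theorem theorem7p4:
  fixes G :: "'a::linorder game"
  assumes "wf_game G" and "passable G" and "canonical G"
  shows "monotone_game G"
  using monotone_game_if_passable_canonical assms(2,3) .

end
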